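(* Let $\zeta\in\mathbb{T}$ and let $G=(\textup{C}(G),\rho^{\textup{C}(G)},\Delta_G)$ be a braided compact quantum group over $\mathbb{T}$. Let $(\mathcal{H},U,u)$ be a finite-dimensional unitary representation of $G$, where $\mathcal{H}$ has an orthonormal basis $e_1,\dots,e_n$ with $U(z)e_i=z^{d_i}e_i$ ($d_i\in\mathbb{Z}$) and $u=(u_{ij})_{1\le i,j\le n}$ is the matrix of $u$ in this basis. Then $(\overline{\mathcal{H}},\overline{U},\overline{u}_{\zeta})$ is also a representation of $G$, where $\overline{\mathcal{H}}$ is the conjugate Hilbert space, $\overline{U}$ the conjugate representation of $\mathbb{T}$ on $\overline{\mathcal{H}}$ (so $\overline{U}(z)\overline{e_i}=z^{-d_i}\overline{e_i}$), and $\overline{u}_{\zeta}$ is the matrix $(\zeta^{d_i(d_j-d_i)}u_{ij}^* )_{1\le i,j\le n}$ with respect to the basis $\overline{e_1},\dots,\overline{e_n}$; that is, $\overline{u}_\zeta$ is invariant under $\rho^{\mathcal{K}(\overline{\mathcal{H}})}_z\otimes\rho^{\textup{C}(G)}_z$ for all $z\in\mathbb{T}$ and $\Delta_G((\overline{u}_\zeta)_{ij})=\sum_{k=1}^n j_1((\overline{u}_\zeta)_{ik})j_2((\overline{u}_\zeta)_{kj})$ for all $i,j$.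
   Context: A $\mathbb{T}$-$\textup{C}^*$-algebra is a pair $(X,\rho^X)$ with $X$ a unital $\textup{C}^*$-algebra and $\rho^X:X\to X\otimes \textup{C}(\mathbb{T})$ a unital $*$-homomorphism with $(\rho^X\otimes\mathrm{id})\rho^X=(\mathrm{id}\otimes\Delta_{\mathbb{T}})\rho^X$ (where $\Delta_{\mathbb{T}}(z)=z\otimes z$) and with $\rho^X(X)(1\otimes \textup{C}(\mathbb{T}))$ having closed linear span $X\otimes \textup{C}(\mathbb{T})$; $\rho^X_z(x)\in X$ denotes the value of $\rho^X(x)\in \textup{C}(\mathbb{T},X)$ at $z$. An element $x$ is homogeneous of degree $k$ if $\rho^X(x)=x\otimes z^k$. A $\mathbb{T}$-equivariant morphism $\phi:X\to Y$ is a unital $*$-homomorphism with $\rho^Y\circ\phi=(\phi\otimes\mathrm{id})\circ\rho^X$. Fix $\zeta\in\mathbb{T}$ and let $\textup{C}(\mathbb{T}^2_\zeta)$ be the universal $\textup{C}^*$-algebra generated by unitaries $U,V$ with $VU=\zeta UV$. For $\mathbb{T}$-$\textup{C}^*$-algebras $X,Y$ define $j_1:X\to X\otimes Y\otimes \textup{C}(\mathbb{T}^2_\zeta)$, $j_2:Y\to X\otimes Y\otimes \textup{C}(\mathbb{T}^2_\zeta)$ as the $*$-homomorphisms with $j_1(x)=x\otimes 1\otimes U^k$ for $x$ of degree $k$ and $j_2(y)=1\otimes y\otimes V^l$ for $y$ of degree $l$; then $j_2(y)j_1(x)=\zeta^{kl}j_1(x)j_2(y)$. The braided tensor product $X\boxtimes_\zeta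 Y$ is the closed linear span of $j_1(X)j_2(Y)$, a $\mathbb{T}$-$\textup{C}^*$-algebra in which $j_1(x)j_2(y)$ has degree $k+l$. For $\mathbb{T}$-equivariant $\pi_1,\pi_2$, $\pi_1\boxtimes_\zeta\pi_2$ is the $\mathbb{T}$-equivariant morphism with $j_1(x_1)j_2(x_2)\mapsto j_1(\pi_1(x_1))j_2(\pi_2(x_2))$. A braided compact quantum group over $\mathbb{T}$ is a triple $(\textup{C}(G),\rho^{\textup{C}(G)},\Delta_G)$ with $(\textup{C}(G),\rho^{\textup{C}(G)})$ a $\mathbb{T}$-$\textup{C}^*$-algebra and $\Delta_G:\textup{C}(G)\to \textup{C}(G)\boxtimes_\zeta \textup{C}(G)$ a $\mathbb{T}$-equivariant morphism which is coassociative, $(\Delta_G\boxtimes_\zeta\mathrm{id})\Delta_G=(\mathrm{id}\boxtimes_\zeta\Delta_G)\Delta_G$, and bisimplifiable: the closed linear spans of $\Delta_G(\textup{C}(G))j_2(\textup{C}(G))$ and of $\Delta_G(\textup{C}(G))j_1(\textup{C}(G))$ both equal $\textup{C}(G)\boxtimes_\zeta \textup{C}(G)$. For a Hilbert space $\mathcal{H}$ with a strongly continuous unitary representation $U$ of $\mathbb{T}$, $\mathcal{K}(\mathcal{H})$ is a $\mathbb{T}$-$\textup{C}^*$-algebra via $\rho_z^{\mathcal{K}(\mathcal{H})}(x)=U(z)xU(z)^*$. A (finite-dimensional) representation of $G$ is a triple $(\mathcal{H},U,u)$, $u=\sum e_{ij}\otimes u_{ij}\in \mathcal{L}(\mathcal{H})\otimes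 \textup{C}(G)$, such that $u$ is invariant under $\rho^{\mathcal{K}(\mathcal{H})}_z\otimes\rho^{\textup{C}(G)}_z$ for all $z\in\mathbb{T}$ (equivalently each $u_{ij}$ is homogeneous of degree $d_j-d_i$) and $\Delta_G(u_{ij})=\sum_k j_1(u_{ik})j_2(u_{kj})$; it is unitary if the matrix $(u_{ij})$ is unitary. *)

theory Defs
  imports Complex_Main
begin

text \<open>Abstract algebraic model of the objects in the paper.  An algebra is a type
  of class ring_1 (the unital ring structure) together with a complex scalar
  multiplication sc and an involution st.\<close>

definition star_alg :: "(complex \<Rightarrow> 'a::ring_1 \<Rightarrow> 'a) \<Rightarrow> ('a \<Rightarrow> 'a) \<Rightarrow> bool" where
  "star_alg sc st \<longleftrightarrow>
     (\<forall>a x y. sc a (x + y) = sc a x + sc a y) \<and>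
     (\<forall>a b x. sc (a + b) x = sc a x + sc b x) \<and>
     (\<forall>a b x. sc (a * b) x = sc a (sc b x)) \<and>
     (\<forall>x. sc 1 x = x) \<and>
     (\<forall>a x y. sc a x * y = sc a (x * y)) \<and>
     (\<forall>a x y. x * sc a y = sc a (x * y)) \<and>
     (\<forall>x. st (st x) = x) \<and>
     (\<forall>x y. st (x + y) = st x + st y) \<and>
     (\<forall>x y. st (x * y) = st y * st x) \<and>
     (\<forall>a x. st (sc a x) = sc (cnj a) (st x))"

definition star_hom ::
  "(complex \<Rightarrow> 'a::ring_1 \<Rightarrow> 'a) \<Rightarrow> ('a \<Rightarrow> 'a) \<Rightarrow>
   (complex \<Rightarrow> 'b::ring_1 \<Rightarrow> 'b) \<Rightarrow> ('b \<Rightarrow> 'b) \<Rightarrow> ('a \<Rightarrow> 'b) \<Rightarrow> bool" where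
  "star_hom scA stA scB stB f \<longleftrightarrow>
     (\<forall>x y. f (x + y) = f x + f y) \<and>
     (\<forall>x y. f (x * y) = f x * f y) \<and>
     f 1 = 1 \<and>
     (\<forall>a x. f (scA a x) = scB a (f x)) \<and>
     (\<forall>x. f (stA x) = stB (f x))"

definition T_alg :: "(complex \<Rightarrow> 'a::ring_1 \<Rightarrow> 'a) \<Rightarrow> ('a \<Rightarrow> 'a) \<Rightarrow>
                     (complex \<Rightarrow> 'a \<Rightarrow> 'a) \<Rightarrow> bool" where
  "T_alg sc st rho \<longleftrightarrow> star_alg sc st \<and>
     (\<forall>z. cmod z = 1 \<longrightarrow> star_hom sc st sc st (rho z)) \<and>
     (\<forall>x. rho 1 x = x) \<and>
     (\<forall>z w x. cmod z = 1 \<longrightarrow> cmod w = 1 \<longrightarrow> rho (z * w) x = rho z (rho w x))"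

definition hom_deg :: "(complex \<Rightarrow> 'a \<Rightarrow> 'a) \<Rightarrow> (complex \<Rightarrow> 'a \<Rightarrow> 'a) \<Rightarrow> int \<Rightarrow> 'a \<Rightarrow> bool" where
  "hom_deg sc rho k x \<longleftrightarrow> (\<forall>z. cmod z = 1 \<longrightarrow> rho z x = sc (z powi k) x)"

definition T_equivariant ::
  "(complex \<Rightarrow> 'a \<Rightarrow> 'a) \<Rightarrow> (complex \<Rightarrow> 'b \<Rightarrow> 'b) \<Rightarrow> ('a \<Rightarrow> 'b) \<Rightarrow> bool" where
  "T_equivariant rhoA rhoB f \<longleftrightarrow> (\<forall>z x. cmod z = 1 \<longrightarrow> rhoB z (f x) = f (rhoA z x))"

text \<open>(B, j1, j2) is (an abstract model of) the braided tensor product of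
  (A, rhoA) with itself: j1, j2 are T-equivariant unital *-homomorphisms
  satisfying the braiding relation j2(y) j1(x) = zeta^(kl) j1(x) j2(y).\<close>
definition braided_tensor ::
  "complex \<Rightarrow> (complex \<Rightarrow> 'a::ring_1 \<Rightarrow> 'a) \<Rightarrow> ('a \<Rightarrow> 'a) \<Rightarrow> (complex \<Rightarrow> 'a \<Rightarrow> 'a) \<Rightarrow>
   (complex \<Rightarrow> 'b::ring_1 \<Rightarrow> 'b) \<Rightarrow> ('b \<Rightarrow> 'b) \<Rightarrow> (complex \<Rightarrow> 'b \<Rightarrow> 'b) \<Rightarrow>
   ('a \<Rightarrow> 'b) \<Rightarrow> ('a \<Rightarrow> 'b) \<Rightarrow> bool" where
  "braided_tensor \<zeta> scA stA rhoA scB stB rhoB j1 j2 \<longleftrightarrow>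
     T_alg scA stA rhoA \<and> T_alg scB stB rhoB \<and>
     star_hom scA stA scB stB j1 \<and> star_hom scA stA scB stB j2 \<and>
     T_equivariant rhoA rhoB j1 \<and> T_equivariant rhoA rhoB j2 \<and>
     (\<forall>k l x y. hom_deg scA rhoA k x \<longrightarrow> hom_deg scA rhoA l y \<longrightarrow>
        j2 y * j1 x = scB (\<zeta> powi (k * l)) (j1 x * j2 y))"

definition braided_cqg ::
  "complex \<Rightarrow> (complex \<Rightarrow> 'a::ring_1 \<Rightarrow> 'a) \<Rightarrow> ('a \<Rightarrow> 'a) \<Rightarrow> (complex \<Rightarrow> 'a \<Rightarrow> 'a) \<Rightarrow>
   (complex \<Rightarrow> 'b::ring_1 \<Rightarrow> 'b) \<Rightarrow> ('b \<Rightarrow> 'b) \<Rightarrow> (complex \<Rightarrow> 'b \<Rightarrow> 'b) \<Rightarrow>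
   ('a \<Rightarrow> 'b) \<Rightarrow> ('a \<Rightarrow> 'b) \<Rightarrow> ('a \<Rightarrow> 'b) \<Rightarrow> bool" where
  "braided_cqg \<zeta> scA stA rhoA scB stB rhoB j1 j2 \<Delta> \<longleftrightarrow>
     braided_tensor \<zeta> scA stA rhoA scB stB rhoB j1 j2 \<and>
     star_hom scA stA scB stB \<Delta> \<and> T_equivariant rhoA rhoB \<Delta>"

text \<open>Representation on C^n with orthonormal basis e_0..e_(n-1), U(z) e_i = z^(d i) e_i,
  matrix (u i j): invariance (each u i j homogeneous of degree d j - d i)
  and the comultiplication identity.\<close>
definition is_rep ::
  "(complex \<Rightarrow> 'a::ring_1 \<Rightarrow> 'a) \<Rightarrow> (complex \<Rightarrow> 'a \<Rightarrow> 'a) \<Rightarrow>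
   ('a \<Rightarrow> 'b::ring_1) \<Rightarrow> ('a \<Rightarrow> 'b) \<Rightarrow> ('a \<Rightarrow> 'b) \<Rightarrow>
   nat \<Rightarrow> (nat \<Rightarrow> int) \<Rightarrow> (nat \<Rightarrow> nat \<Rightarrow> 'a) \<Rightarrow> bool" where
  "is_rep sc rho \<Delta> j1 j2 n d u \<longleftrightarrow>
     (\<forall>i<n. \<forall>j<n. hom_deg sc rho (d j - d i) (u i j)) \<and>
     (\<forall>i<n. \<forall>j<n. \<Delta> (u i j) = (\<Sum>k<n. j1 (u i k) * j2 (u k j)))"

definition unitary_mat :: "('a::ring_1 \<Rightarrow> 'a) \<Rightarrow> nat \<Rightarrow> (nat \<Rightarrow> nat \<Rightarrow> 'a) \<Rightarrow> bool" where
  "unitary_mat st n u \<longleftrightarrow>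
     (\<forall>i<n. \<forall>j<n. (\<Sum>k<n. u i k * st (u j k)) = (if i = j then 1 else 0)) \<and>
     (\<forall>i<n. \<forall>j<n. (\<Sum>k<n. st (u k i) * u k j) = (if i = j then 1 else 0))"

definition conj_mat ::
  "(complex \<Rightarrow> 'a \<Rightarrow> 'a) \<Rightarrow> ('a \<Rightarrow> 'a) \<Rightarrow> complex \<Rightarrow> (nat \<Rightarrow> int) \<Rightarrow>
   (nat \<Rightarrow> nat \<Rightarrow> 'a) \<Rightarrow> nat \<Rightarrow> nat \<Rightarrow> 'a" where
  "conj_mat sc st \<zeta> d u = (\<lambda>i j. sc (\<zeta> powi (d i * (d j - d i))) (st (u i j)))"

end

theory Submission
  imports Defs
begin

text \<open>Each entry u_ij^* is homogeneous of degree d_i - d_j.  The star turns each summand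
  j1(u_ik) j2(u_kj) of Delta(u_ij) into j2(u_kj^*) j1(u_ik^*), and the braiding relation moves
  j1 back in front at the cost of zeta^((d_k - d_i)(d_j - d_k)).  Together with the twist
  zeta^(d_i (d_j - d_i)) this is the product of the twists of the (i,k) and (k,j) entries, since
  d_i (d_j - d_i) + (d_k - d_i)(d_j - d_k) = d_i (d_k - d_i) + d_k (d_j - d_k).\<close>

lemma cnj_power_int_unimodular:
  assumes "cmod z = 1"
  shows "cnj (z powi k) = z powi (- k)"
proof -
  have "z * cnj z = 1"
    using assms complex_norm_square[of z] by simp
  then have "cnj z = inverse z"
    by (metis inverse_unique)
  then show ?thesis
    by (simp add: power_int_minus power_int_inverse)
qed

lemma additive_sum:
  fixes f :: "'a::ring_1 \<Rightarrow> 'b::ring_1"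
  assumes "\<And>x y. f (x + y) = f x + f y"
  shows "f (sum g A) = (\<Sum>k\<in>A. f (g k))"
proof -
  have "f 0 = 0"
    using assms[of 0 0] by simp
  then have "sum (f \<circ> g) A = f (sum g A)"
    using assms by (rule sum_comp_morphism)
  then show ?thesis
    by (simp add: comp_def)
qed

lemma star_alg_st_sum:
  assumes "star_alg sc st"
  shows "st (sum g A) = (\<Sum>k\<in>A. st (g k))"
  using assms by (intro additive_sum) (simp add: star_alg_def)

lemma star_alg_sc_sum:
  assumes "star_alg sc st"
  shows "sc a (sum g A) = (\<Sum>k\<in>A. sc a (g k))"
  using assms by (intro additive_sum) (simp add: star_alg_def)

lemma star_alg_sc_sc:
  assumes "star_alg sc st"
  shows "sc a (sc b x) = sc (a * b) x"
  using assms by (simp add: star_alg_def)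

lemma star_alg_sc_mult_sc:
  assumes "star_alg sc st"
  shows "sc a x * sc b y = sc (a * b) (x * y)"
  using assms unfolding star_alg_def by (metis mult.commute)

lemma hom_deg_sc:
  assumes "T_alg sc st rho" and "hom_deg sc rho k x"
  shows "hom_deg sc rho k (sc a x)"
  unfolding hom_deg_def
proof (intro allI impI)
  fix z :: complex
  assume z: "cmod z = 1"
  have alg: "star_alg sc st" and "star_hom sc st sc st (rho z)"
    using assms(1) z by (auto simp: T_alg_def)
  then have "rho z (sc a x) = sc a (rho z x)"
    by (simp add: star_hom_def)
  also have "\<dots> = sc (a * z powi k) x"
    using assms(2) z alg by (simp add: hom_deg_def star_alg_sc_sc)
  also have "\<dots> = sc (z powi k) (sc a x)"
    using alg by (simp add: star_alg_sc_sc mult.commute)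
  finally show "rho z (sc a x) = sc (z powi k) (sc a x)" .
qed

lemma hom_deg_st:
  assumes "T_alg sc st rho" and "hom_deg sc rho k x"
  shows "hom_deg sc rho (- k) (st x)"
  unfolding hom_deg_def
proof (intro allI impI)
  fix z :: complex
  assume z: "cmod z = 1"
  have alg: "star_alg sc st" and "star_hom sc st sc st (rho z)"
    using assms(1) z by (auto simp: T_alg_def)
  then have "rho z (st x) = st (rho z x)"
    by (simp add: star_hom_def)
  also have "\<dots> = sc (cnj (z powi k)) (st x)"
    using assms(2) z alg by (simp add: hom_deg_def star_alg_def del: complex_cnj_power_int)
  finally show "rho z (st x) = sc (z powi (- k)) (st x)"
    using cnj_power_int_unimodular[OF z] by simp
qed

lemma braided_tensor_st_j1_mult_j2:
  assumes "braided_tensor \<zeta> scA stA rhoA scB stB rhoB j1 j2"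
    and "hom_deg scA rhoA k x" and "hom_deg scA rhoA l y"
  shows "stB (j1 x * j2 y) = scB (\<zeta> powi (k * l)) (j1 (stA x) * j2 (stA y))"
proof -
  have TA: "T_alg scA stA rhoA" and "T_alg scB stB rhoB"
    and "star_hom scA stA scB stB j1" and "star_hom scA stA scB stB j2"
    and braid: "\<And>k l x y. hom_deg scA rhoA k x \<Longrightarrow> hom_deg scA rhoA l y \<Longrightarrow>
        j2 y * j1 x = scB (\<zeta> powi (k * l)) (j1 x * j2 y)"
    using assms(1) by (auto simp: braided_tensor_def)
  then have "stB (j1 x * j2 y) = j2 (stA y) * j1 (stA x)"
    by (simp add: T_alg_def star_alg_def star_hom_def)
  also have "\<dots> = scB (\<zeta> powi ((- k) * (- l))) (j1 (stA x) * j2 (stA y))"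
    using braid hom_deg_st[OF TA assms(2)] hom_deg_st[OF TA assms(3)] by blast
  finally show ?thesis
    by simp
qed

lemma conj_mat_hom_deg:
  assumes "T_alg sc st rho" and "hom_deg sc rho (d j - d i) (u i j)"
  shows "hom_deg sc rho ((- d j) - (- d i)) (conj_mat sc st \<zeta> d u i j)"
  using hom_deg_sc[OF assms(1) hom_deg_st[OF assms]] by (simp add: conj_mat_def)

lemma conj_mat_comult:
  assumes "\<zeta> \<noteq> 0"
    and "braided_cqg \<zeta> scA stA rhoA scB stB rhoB j1 j2 \<Delta>"
    and "is_rep scA rhoA \<Delta> j1 j2 n d u"
    and i: "i < n" and j: "j < n"
  shows "\<Delta> (conj_mat scA stA \<zeta> d u i j)
    = (\<Sum>k<n. j1 (conj_mat scA stA \<zeta> d u i k) * j2 (conj_mat scA stA \<zeta> d u k j))"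
proof -
  have bt: "braided_tensor \<zeta> scA stA rhoA scB stB rhoB j1 j2"
    and "star_hom scA stA scB stB \<Delta>"
    using assms(2) by (auto simp: braided_cqg_def)
  then have "star_hom scA stA scB stB j1" and "star_hom scA stA scB stB j2"
    and algB: "star_alg scB stB"
    by (auto simp: braided_tensor_def T_alg_def)
  have deg: "\<And>i j. i < n \<Longrightarrow> j < n \<Longrightarrow> hom_deg scA rhoA (d j - d i) (u i j)"
    and comult: "\<Delta> (u i j) = (\<Sum>k<n. j1 (u i k) * j2 (u k j))"
    using assms(3) i j by (auto simp: is_rep_def)
  define twist where "twist a b = \<zeta> powi (d a * (d b - d a))" for a b
  have "\<Delta> (conj_mat scA stA \<zeta> d u i j) = scB (twist i j) (stB (\<Delta> (u i j)))"
    using \<open>star_hom scA stA scB stB \<Delta>\<close> by (simp add: conj_mat_def star_hom_def twist_def)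
  also have "\<dots> = (\<Sum>k<n. scB (twist i j) (stB (j1 (u i k) * j2 (u k j))))"
    using algB by (simp add: comult star_alg_st_sum star_alg_sc_sum)
  also have "\<dots> = (\<Sum>k<n. j1 (conj_mat scA stA \<zeta> d u i k) * j2 (conj_mat scA stA \<zeta> d u k j))"
  proof (rule sum.cong[OF refl])
    fix k
    assume "k \<in> {..<n}"
    then have k: "k < n" by simp
    have exponent: "d i * (d j - d i) + (d k - d i) * (d j - d k)
        = d i * (d k - d i) + d k * (d j - d k)"
      by (simp add: algebra_simps)
    have "scB (twist i j) (stB (j1 (u i k) * j2 (u k j)))
        = scB (twist i j * \<zeta> powi ((d k - d i) * (d j - d k))) (j1 (stA (u i k)) * j2 (stA (u k j)))"
      using braided_tensor_st_j1_mult_j2[OF bt deg[OF i k] deg[OF k j]] algB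
      by (simp add: star_alg_sc_sc)
    also have "\<dots> = scB (twist i k * twist k j) (j1 (stA (u i k)) * j2 (stA (u k j)))"
      using exponent assms(1) by (simp add: twist_def flip: power_int_add)
    also have "\<dots> = j1 (conj_mat scA stA \<zeta> d u i k) * j2 (conj_mat scA stA \<zeta> d u k j)"
      using \<open>star_hom scA stA scB stB j1\<close> \<open>star_hom scA stA scB stB j2\<close> algB
      by (simp add: conj_mat_def star_hom_def twist_def star_alg_sc_mult_sc)
    finally show "scB (twist i j) (stB (j1 (u i k) * j2 (u k j)))
        = j1 (conj_mat scA stA \<zeta> d u i k) * j2 (conj_mat scA stA \<zeta> d u k j)" .
  qed
  finally show ?thesis .
qed

theorem proposition2p13:
  fixes scA :: "complex \<Rightarrow> 'a::ring_1 \<Rightarrow> 'a" and stA :: "'a \<Rightarrow> 'a"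
    and rhoA :: "complex \<Rightarrow> 'a \<Rightarrow> 'a"
    and scB :: "complex \<Rightarrow> 'b::ring_1 \<Rightarrow> 'b" and stB :: "'b \<Rightarrow> 'b"
    and rhoB :: "complex \<Rightarrow> 'b \<Rightarrow> 'b"
    and j1 j2 \<Delta> :: "'a \<Rightarrow> 'b"
    and \<zeta> :: complex and n :: nat and d :: "nat \<Rightarrow> int" and u :: "nat \<Rightarrow> nat \<Rightarrow> 'a"
  assumes "cmod \<zeta> = 1"
    and "braided_cqg \<zeta> scA stA rhoA scB stB rhoB j1 j2 \<Delta>"
    and "is_rep scA rhoA \<Delta> j1 j2 n d u"
    and "unitary_mat stA n u"
  shows "is_rep scA rhoA \<Delta> j1 j2 n (\<lambda>i. - d i) (conj_mat scA stA \<zeta> d u)"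
proof -
  have "\<zeta> \<noteq> 0"
    using assms(1) by auto
  have "T_alg scA stA rhoA"
    using assms(2) by (simp add: braided_cqg_def braided_tensor_def)
  then have "hom_deg scA rhoA ((- d j) - (- d i)) (conj_mat scA stA \<zeta> d u i j)"
    if "i < n" "j < n" for i j
    using assms(3) that by (intro conj_mat_hom_deg) (auto simp: is_rep_def)
  moreover have "\<Delta> (conj_mat scA stA \<zeta> d u i j)
      = (\<Sum>k<n. j1 (conj_mat scA stA \<zeta> d u i k) * j2 (conj_mat scA stA \<zeta> d u k j))"
    if "i < n" "j < n" for i j
    using conj_mat_comult[OF \<open>\<zeta> \<noteq> 0\<close> assms(2,3) that] .
  ultimately show ?thesis
    by (simp add: is_rep_def)
qed

end
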